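(* Let $M_1,\dots,M_s$ be complex $4\times 4$ matrices each of rank exactly $2$. Then there exists an open dense subset $\Delta\subset L\times L$, where $L$ is the space of real $4\times 4$ matrices, such that for every $(L_1,L_2)\in\Delta$ and every $1\le i\le s$, the leading principal minor of order $2$ of $L_1 M_i L_2$ (the determinant of its upper-left $2\times 2$ submatrix) is nonzero. *)

theory Defs
  imports "HOL-Analysis.Analysis"
begin

definition cmat :: "real^'n^'m \<Rightarrow> complex^'n^'m" where
  "cmat A = (\<chi> i j. complex_of_real (A $ i $ j))"

text \<open>Leading principal minor of order 2: the determinant of the upper-left
  2x2 submatrix (rows and columns with indices 1, 2, following the
  HOL-Analysis convention that 1 is the first index).\<close>
definition lead_minor2 :: "complex^4^4 \<Rightarrow> complex" where
  "lead_minor2 A = A $ 1 $ 1 * A $ 2 $ 2 - A $ 1 $ 2 * A $ 2 $ 1"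

end

theory Submission
  imports Defs "HOL-Computational_Algebra.Polynomial"
begin

text \<open>A matrix of rank 2 has a nonvanishing 2x2 minor, and suitable 0/1 selection matrices move
  it into the upper-left corner; so for each \<open>M\<^sub>i\<close> the polynomial function
  \<open>(L\<^sub>1, L\<^sub>2) \<mapsto> lead_minor2 (L\<^sub>1 M\<^sub>i L\<^sub>2)\<close> is not identically zero.
  Restricted to any real line it is a polynomial of one variable, hence has only finitely many
  zeros there, so its nonvanishing set is dense; it is open by continuity. The required set is
  the finite intersection of these dense open sets.\<close>

lemma rank_le_1_if_minors2_vanish:
  fixes M :: "'a::field^'n^'m"
  assumes minors: "\<And>a b c d. M$a$c * M$b$d - M$a$d * M$b$c = 0"
  shows "rank M \<le> 1"
proof -
  obtain a where rows_span: "rows M \<subseteq> vec.span {M$a}"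
  proof (cases "\<exists>a c. M$a$c \<noteq> 0")
    case True
    then obtain a c where ac: "M$a$c \<noteq> 0" by blast
    have "M$b = (M$b$c / M$a$c) *s M$a" for b
      unfolding vec_eq_iff using minors[of a c b] ac by (simp add: field_simps)
    then have "M$b \<in> vec.span {M$a}" for b
      by (metis vec.span_base vec.span_scale insertI1)
    then show thesis by (intro that[of a]) (auto simp: rows_def row_def vec_lambda_eta)
  next
    case False
    then have "rows M \<subseteq> {0}" by (auto simp: rows_def row_def vec_eq_iff)
    then show thesis using vec.span_zero by (intro that) blast
  qed
  have "vec.dim (rows M) \<le> card {M$a}"
    using rows_span by (intro vec.dim_le_card) auto
  then show ?thesis by (simp add: row_rank_def_gen)
qed

lemma lead_minor2_select:
  fixes M :: "complex^4^4"
  shows "\<exists>L1 L2. lead_minor2 (cmat L1 ** M ** cmat L2) = M$a$c * M$b$d - M$a$d * M$b$c"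
proof -
  define L1 :: "real^4^4" where "L1 = (\<chi> i k. if (i=1 \<and> k=a) \<or> (i=2 \<and> k=b) then 1 else 0)"
  define L2 :: "real^4^4" where "L2 = (\<chi> l j. if (j=1 \<and> l=c) \<or> (j=2 \<and> l=d) then 1 else 0)"
  have "(1::4) \<noteq> 2" by simp
  then have "(cmat L1 ** M ** cmat L2) $ 1 $ 1 = M$a$c"
            "(cmat L1 ** M ** cmat L2) $ 1 $ 2 = M$a$d"
            "(cmat L1 ** M ** cmat L2) $ 2 $ 1 = M$b$c"
            "(cmat L1 ** M ** cmat L2) $ 2 $ 2 = M$b$d"
    by (simp_all add: matrix_matrix_mult_def cmat_def L1_def L2_def if_distrib[of complex_of_real]
        mult_delta_left mult_delta_right sum.delta sum.delta' cong: if_cong)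
  then show ?thesis by (intro exI[of _ L1] exI[of _ L2]) (simp add: lead_minor2_def)
qed

lemma rank2_imp_lead_minor2_nonzero:
  fixes M :: "complex^4^4"
  assumes "rank M = 2"
  shows "\<exists>L1 L2. lead_minor2 (cmat L1 ** M ** cmat L2) \<noteq> 0"
  using rank_le_1_if_minors2_vanish[of M] lead_minor2_select[of M] assms by fastforce

lemma dense_nonzero_if_poly_on_lines:
  fixes g :: "'a::real_normed_vector \<Rightarrow> complex"
  assumes nonzero: "g q \<noteq> 0"
    and poly_on_lines: "\<And>z w. \<exists>p. \<forall>t. poly p (of_real t) = g (z + t *\<^sub>R w)"
  shows "closure {z. g z \<noteq> 0} = UNIV"
proof -
  have "x \<in> closure {z. g z \<noteq> 0}" for x
  proof -
    define line where "line t = x + t *\<^sub>R (q - x)" for t :: real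
    obtain p where p: "\<And>t. poly p (of_real t) = g (line t)"
      using poly_on_lines unfolding line_def by blast
    have "p \<noteq> 0" using p[of 1] nonzero by (auto simp: line_def)
    then have "finite (of_real -` {y. poly p y = 0} :: real set)"
      by (intro finite_vimageI poly_roots_finite inj_of_real)
    then have "closure (- (of_real -` {y. poly p y = 0})) = (UNIV :: real set)"
      by (simp add: closure_complement empty_interior_finite)
    moreover have "continuous_on UNIV line"
      unfolding line_def by (intro continuous_intros)
    moreover have "line ` (- (of_real -` {y. poly p y = 0})) \<subseteq> closure {z. g z \<noteq> 0}"
      using p closure_subset by fastforce
    ultimately have "line ` UNIV \<subseteq> closure {z. g z \<noteq> 0}"
      by (metis image_closure_subset closed_closure)
    then show ?thesis by (force simp: line_def)
  qed
  then show ?thesis by auto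
qed

definition poly_mat :: "'a::comm_semiring_1 poly^'n^'m \<Rightarrow> 'a \<Rightarrow> 'a^'n^'m" where
  "poly_mat X z = (\<chi> i j. poly (X$i$j) z)"

lemma poly_mat_mult: "poly_mat (X ** Y) z = poly_mat X z ** poly_mat Y z"
  by (simp add: poly_mat_def matrix_matrix_mult_def vec_eq_iff poly_sum)

definition line_pmat :: "real^'n^'m \<Rightarrow> real^'n^'m \<Rightarrow> complex poly^'n^'m" where
  "line_pmat A C = (\<chi> i j. [:complex_of_real (A$i$j), complex_of_real (C$i$j):])"

lemma poly_mat_line_pmat: "poly_mat (line_pmat A C) (of_real t) = cmat (A + t *\<^sub>R C)"
  by (simp add: poly_mat_def line_pmat_def cmat_def vec_eq_iff algebra_simps)

definition const_pmat :: "'a::zero^'n^'m \<Rightarrow> 'a poly^'n^'m" where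
  "const_pmat M = (\<chi> i j. [:M$i$j:])"

lemma poly_mat_const_pmat: "poly_mat (const_pmat M) x = M"
  by (simp add: poly_mat_def const_pmat_def vec_eq_iff)

definition lead_minor2_poly :: "complex poly^4^4 \<Rightarrow> complex poly" where
  "lead_minor2_poly X = X$1$1 * X$2$2 - X$1$2 * X$2$1"

lemma poly_lead_minor2_poly: "poly (lead_minor2_poly X) x = lead_minor2 (poly_mat X x)"
  by (simp add: lead_minor2_poly_def lead_minor2_def poly_mat_def)

lemma lead_minor2_product_poly_on_lines:
  fixes M :: "complex^4^4"
  shows "\<exists>p. \<forall>t. poly p (of_real t) =
     lead_minor2 (cmat (fst (z + t *\<^sub>R w)) ** M ** cmat (snd (z + t *\<^sub>R w)))"
  by (rule exI[of _ "lead_minor2_poly (line_pmat (fst z) (fst w) ** const_pmat M **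
                                     line_pmat (snd z) (snd w))"])
     (simp add: poly_lead_minor2_poly poly_mat_mult poly_mat_line_pmat poly_mat_const_pmat)

lemma continuous_on_lead_minor2_product:
  fixes M :: "complex^4^4"
  shows "continuous_on UNIV
           (\<lambda>z::(real^4^4)\<times>(real^4^4). lead_minor2 (cmat (fst z) ** M ** cmat (snd z)))"
  unfolding lead_minor2_def matrix_matrix_mult_def cmat_def
  by (simp; intro continuous_intros)

theorem lemma4p1:
  fixes M :: "nat \<Rightarrow> complex^4^4" and s :: nat
  assumes "\<forall>i\<in>{1..s}. rank (M i) = 2"
  shows "\<exists>\<Delta> :: ((real^4^4) \<times> (real^4^4)) set.
           open \<Delta> \<and> closure \<Delta> = UNIV \<and>
           (\<forall>L1 L2 i. (L1, L2) \<in> \<Delta> \<and> i \<in> {1..s} \<longrightarrow>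
              lead_minor2 (cmat L1 ** M i ** cmat L2) \<noteq> 0)"
proof -
  define U where
    "U i = {z::(real^4^4)\<times>(real^4^4). lead_minor2 (cmat (fst z) ** M i ** cmat (snd z)) \<noteq> 0}"
    for i
  have open_U: "open (U i)" for i
    unfolding U_def by (rule open_Collect_neq[OF continuous_on_lead_minor2_product continuous_on_const])
  have dense_U: "closure (U i) = UNIV" if i: "i \<in> {1..s}" for i
  proof -
    obtain L1 L2 where "lead_minor2 (cmat L1 ** M i ** cmat L2) \<noteq> 0"
      using rank2_imp_lead_minor2_nonzero assms i by blast
    then show ?thesis unfolding U_def
      by (intro dense_nonzero_if_poly_on_lines[where q="(L1,L2)"] lead_minor2_product_poly_on_lines)
         auto
  qed
  have "UNIV \<subseteq> closure (\<Inter>(U ` {1..s}))"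
    using open_U dense_U by (intro Baire) auto
  moreover have "open (\<Inter>(U ` {1..s}))"
    using open_U by (intro open_INT) auto
  ultimately show ?thesis
    by (intro exI[of _ "\<Inter>(U ` {1..s})"]) (auto simp: U_def)
qed

end
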